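(* Let $\mathcal N$ be a monotone BAN of size $n$ and $x\to y$ a synchronous transition of $\mathcal N$. If there is no $x$-critical cycle of $\mathcal N$ whose node set is contained in $D(x,y)$, then there is a derivation from $x$ to $y$ consisting only of asynchronous transitions (i.e. $x\to^*_{a} y$). Consequently, if for some $m\ge2$ the network $\mathcal N$ has no critical cycle with at most $m$ distinct nodes, then every transition of size at most $m$ can be decomposed into a derivation of asynchronous transitions.
   Context: Let $n\ge 1$, $V=\{0,\dots,n-1\}$, $\mathbb B=\{0,1\}$; $\bar x^{i}$ is $x$ with coordinate $i$ negated; $D(x,y)=\{i:x_i\ne y_i\}$, $d(x,y)=|D(x,y)|$; $\mathbf s(1)=1,\mathbf s(0)=-1$. A BAN of size $n$ is a family $(f_i)_{i\in V}$, $f_i:\mathbb B^n\to\mathbb B$; monotone if for all $i,j$, either $\mathbf s(x_j)(f_i(x)-f_i(\bar x^{j}))\ge0$ for all $x$, or $\le0$ for all $x$. Structure $G=(V,A)$, $A=\{(j,i):\exists x,\ f_i(x)\ne f_i(\bar x^j)\}$; $\mathrm{sign}(j,i)=\mathbf s(x_j)(f_i(x)-f_i(\bar x^j))\in\{\pm1\}$ for any $x$ with $f_i(x)\ne f_i(\bar x^j)$. $U(x)=\{i:f_i(x)\ne x_i\}$; $\mathrm{FRUS}(x)=\{(j,i)\in A:\mathbf s(x_j)\mathbf s(x_i)=-\mathrm{sign}(j,i)\}$. A transition is a pair $(x,y)$ with $\emptyset\ne D(x,y)\subseteq U(x)$, written $x\to y$, of size $d(x,y)$; asynchronous if of size 1,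 synchronous if of size $\ge2$. A derivation is a finite sequence $x^0\to x^1\to\dots\to x^k$ ($k\ge1$) of transitions; $x\to^*_a y$ means there is a derivation from $x$ to $y$ made of asynchronous transitions. A cycle of $\mathcal N$ is a subgraph $(V_C,A_C)$ of $G$ made of the nodes and arcs of a closed directed walk with no repeated arcs (nodes may repeat); it is $x$-critical if $V_C\subseteq U(x)$ and $A_C\subseteq\mathrm{FRUS}(x)$, and critical if $x$-critical for some $x$. *)

theory Defs
  imports Main
begin

text \<open>A BAN of size n: node set V is the finite type 'n (n = CARD('n) \<ge> 1);
configurations are x :: 'n \<Rightarrow> bool; f i is the local function of node i.\<close>

type_synonym 'n ban = "'n \<Rightarrow> ('n \<Rightarrow> bool) \<Rightarrow> bool"

definition flip :: "('n \<Rightarrow> bool) \<Rightarrow> 'n \<Rightarrow> ('n \<Rightarrow> bool)" where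
  "flip x j = x(j := \<not> x j)"

definition Dset :: "('n \<Rightarrow> bool) \<Rightarrow> ('n \<Rightarrow> bool) \<Rightarrow> 'n set" where
  "Dset x y = {i. x i \<noteq> y i}"

definition sgnb :: "bool \<Rightarrow> int" where
  "sgnb b = (if b then 1 else -1)"

definition delta :: "'n ban \<Rightarrow> 'n \<Rightarrow> 'n \<Rightarrow> ('n \<Rightarrow> bool) \<Rightarrow> int" where
  "delta f j i x = sgnb (x j) * (of_bool (f i x) - of_bool (f i (flip x j)))"

definition monotone_ban :: "'n ban \<Rightarrow> bool" where
  "monotone_ban f \<longleftrightarrow> (\<forall>i j. (\<forall>x. delta f j i x \<ge> 0) \<or> (\<forall>x. delta f j i x \<le> 0))"

definition arcs :: "'n ban \<Rightarrow> ('n \<times> 'n) set" where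
  "arcs f = {(j, i). \<exists>x. f i x \<noteq> f i (flip x j)}"

definition arc_sign :: "'n ban \<Rightarrow> 'n \<Rightarrow> 'n \<Rightarrow> int" where
  "arc_sign f j i = delta f j i (SOME x. f i x \<noteq> f i (flip x j))"

definition Uset :: "'n ban \<Rightarrow> ('n \<Rightarrow> bool) \<Rightarrow> 'n set" where
  "Uset f x = {i. f i x \<noteq> x i}"

definition FRUS :: "'n ban \<Rightarrow> ('n \<Rightarrow> bool) \<Rightarrow> ('n \<times> 'n) set" where
  "FRUS f x = {(j, i) \<in> arcs f. sgnb (x j) * sgnb (x i) = - arc_sign f j i}"

definition transition :: "'n ban \<Rightarrow> ('n \<Rightarrow> bool) \<Rightarrow> ('n \<Rightarrow> bool) \<Rightarrow> bool" where
  "transition f x y \<longleftrightarrow> Dset x y \<noteq> {} \<and> Dset x y \<subseteq> Uset f x"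

definition async_transition :: "'n ban \<Rightarrow> ('n \<Rightarrow> bool) \<Rightarrow> ('n \<Rightarrow> bool) \<Rightarrow> bool" where
  "async_transition f x y \<longleftrightarrow> transition f x y \<and> card (Dset x y) = 1"

definition sync_transition :: "'n ban \<Rightarrow> ('n \<Rightarrow> bool) \<Rightarrow> ('n \<Rightarrow> bool) \<Rightarrow> bool" where
  "sync_transition f x y \<longleftrightarrow> transition f x y \<and> card (Dset x y) \<ge> 2"

text \<open>x \<rightarrow>*_a y: a derivation (k \<ge> 1 steps) of asynchronous transitions.\<close>
definition async_derivable :: "'n ban \<Rightarrow> ('n \<Rightarrow> bool) \<Rightarrow> ('n \<Rightarrow> bool) \<Rightarrow> bool" where
  "async_derivable f x y \<longleftrightarrow> (async_transition f)\<^sup>+\<^sup>+ x y"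

text \<open>A closed directed walk with no repeated arcs, given as its list of arcs.\<close>
definition closed_trail :: "'n ban \<Rightarrow> ('n \<times> 'n) list \<Rightarrow> bool" where
  "closed_trail f es \<longleftrightarrow> es \<noteq> [] \<and> distinct es \<and> set es \<subseteq> arcs f
     \<and> (\<forall>t. Suc t < length es \<longrightarrow> snd (es ! t) = fst (es ! Suc t))
     \<and> snd (last es) = fst (hd es)"

definition is_cycle :: "'n ban \<Rightarrow> 'n set \<Rightarrow> ('n \<times> 'n) set \<Rightarrow> bool" where
  "is_cycle f VC AC \<longleftrightarrow> (\<exists>es. closed_trail f es \<and> AC = set es
     \<and> VC = fst ` set es \<union> snd ` set es)"

definition critical_at :: "'n ban \<Rightarrow> ('n \<Rightarrow> bool) \<Rightarrow> 'n set \<Rightarrow> ('n \<times> 'n) set \<Rightarrow> bool" where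
  "critical_at f x VC AC \<longleftrightarrow> is_cycle f VC AC \<and> VC \<subseteq> Uset f x \<and> AC \<subseteq> FRUS f x"

definition critical :: "'n ban \<Rightarrow> 'n set \<Rightarrow> ('n \<times> 'n) set \<Rightarrow> bool" where
  "critical f VC AC \<longleftrightarrow> (\<exists>x. critical_at f x VC AC)"

end

theory Submission
  imports Defs
begin

(* Let x \<rightarrow> y be a transition with D = D(x,y) and suppose no x-critical cycle
   has its nodes in D.  We flip the nodes of D one at a time, by induction on |D|.
   Call j a "successor" of i in D if j \<noteq> i and flipping i alone makes j stable.  By
   monotonicity such an influence is a frustrated arc (i,j) at x, so if every node of D had
   a successor in D, following successors would close a cycle of frustrated arcs among the
   unstable nodes of D, i.e. an x-critical cycle inside D.  Hence some i \<in> D has no successor: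
   x \<rightarrow> x[i flipped] is an asynchronous transition after which D - {i} is still unstable,
   giving a smaller transition to y.  Criticality only depends on the values at the cycle's
   nodes (and on which nodes are unstable), so the hypothesis is inherited, and induction
   applies. *)

lemma delta_unit:
  assumes "f j z \<noteq> f j (flip z i)"
  shows "delta f i j z = 1 \<or> delta f i j z = -1"
  using assms unfolding delta_def sgnb_def by (cases "z i"; cases "f j z") auto

lemma arc_sign_at_witness:
  assumes mono: "monotone_ban f" and wit: "f j x \<noteq> f j (flip x i)"
  shows "arc_sign f i j = delta f i j x"
proof -
  define z where "z = (SOME z. f j z \<noteq> f j (flip z i))"
  have wit_z: "f j z \<noteq> f j (flip z i)" unfolding z_def by (rule someI[of _ x]) (rule wit)
  have sign_z: "arc_sign f i j = delta f i j z" unfolding arc_sign_def z_def ..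
  have "(0 \<le> delta f i j x \<and> 0 \<le> delta f i j z) \<or> (delta f i j x \<le> 0 \<and> delta f i j z \<le> 0)"
    using mono unfolding monotone_ban_def by blast
  then show ?thesis using delta_unit[of f j z i, OF wit_z] delta_unit[of f j x i, OF wit] sign_z
    by linarith
qed

lemma stabilizing_arc_frustrated:
  assumes mono: "monotone_ban f" and unstable: "f j x \<noteq> x j"
    and stabilized: "f j (flip x i) = x j"
  shows "(i, j) \<in> FRUS f x"
proof -
  have wit: "f j x \<noteq> f j (flip x i)" using unstable stabilized by auto
  then have arc: "(i, j) \<in> arcs f" unfolding arcs_def by blast
  have "delta f i j x = - sgnb (x i) * sgnb (x j)"
    using unstable stabilized unfolding delta_def sgnb_def by (cases "x i"; cases "x j") auto
  then show ?thesis using arc arc_sign_at_witness[OF mono wit] unfolding FRUS_def by simp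
qed

lemma successor_walk_returns:
  fixes D :: "'a set"
  assumes fin: "finite D" and ne: "D \<noteq> {}" and succ: "\<forall>i\<in>D. \<exists>j\<in>D. R i j"
  shows "\<exists>a b p. a < b \<and> p a = p b \<and> (\<forall>k. R (p k) (p (Suc k))) \<and> (\<forall>k. p k \<in> D)
           \<and> (\<forall>s t. a \<le> s \<longrightarrow> s < t \<longrightarrow> t < b \<longrightarrow> p s \<noteq> p t)"
proof -
  obtain g where g: "\<forall>i\<in>D. g i \<in> D \<and> R i (g i)" using succ by metis
  obtain i0 where i0: "i0 \<in> D" using ne by blast
  define p where "p k = (g ^^ k) i0" for k
  have p_in: "p k \<in> D" for k unfolding p_def by (induction k) (use i0 g in auto)
  have p_step: "R (p k) (p (Suc k))" for k using g p_in[of k] unfolding p_def by auto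
  have "\<not> inj_on p {..card D}"
  proof
    assume "inj_on p {..card D}"
    then have "card (p ` {..card D}) = Suc (card D)" by (simp add: card_image)
    moreover have "card (p ` {..card D}) \<le> card D"
      using p_in fin by (intro card_mono) auto
    ultimately show False by simp
  qed
  then have repeat: "\<exists>b a. a < b \<and> p a = p b"
    unfolding inj_on_def by (metis linorder_neqE_nat)
  define b where "b = (LEAST b. \<exists>a. a < b \<and> p a = p b)"
  obtain a where ab: "a < b" "p a = p b"
    using LeastI_ex[OF repeat] unfolding b_def[symmetric] by blast
  have "p s \<noteq> p t" if "s < t" "t < b" for s t
    using not_less_Least[of t "\<lambda>b. \<exists>a. a < b \<and> p a = p b"] that unfolding b_def by blast
  then show ?thesis using ab p_step p_in by blast
qed

lemma closed_trail_of_walk: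
  assumes ab: "a < b" "p a = p b"
    and simple: "\<forall>s t. a \<le> s \<longrightarrow> s < t \<longrightarrow> t < b \<longrightarrow> p s \<noteq> p t"
    and arcs: "\<forall>k. (p k, p (Suc k)) \<in> arcs f"
  shows "closed_trail f (map (\<lambda>k. (p k, p (Suc k))) [a..<b])"
    (is "closed_trail f ?es")
proof -
  have nth: "t < b - a \<Longrightarrow> ?es ! t = (p (a + t), p (Suc (a + t)))" for t by simp
  have "inj_on (\<lambda>k. (p k, p (Suc k))) {a..<b}"
    unfolding inj_on_def using simple by (metis atLeastLessThan_iff linorder_neqE_nat prod.inject)
  then have "distinct ?es" by (simp add: distinct_map)
  moreover have "?es \<noteq> []" using ab by simp
  moreover have "snd (last ?es) = p b"
    using ab nth[of "b - a - 1"] by (simp add: last_conv_nth)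
  moreover have "fst (hd ?es) = p a" using ab nth[of 0] by (simp add: hd_conv_nth)
  ultimately show ?thesis unfolding closed_trail_def using arcs ab by auto
qed

lemma critical_cycle_from_successors:
  fixes f :: "'n::finite ban"
  assumes mono: "monotone_ban f" and unstable: "D \<subseteq> Uset f x" and ne: "D \<noteq> {}"
    and succ: "\<forall>i\<in>D. \<exists>j\<in>D. i \<noteq> j \<and> f j (flip x i) = x j"
  shows "\<exists>VC AC. critical_at f x VC AC \<and> VC \<subseteq> D"
proof -
  obtain a b p where ab: "a < b" "p a = p b"
    and step: "\<forall>k. p k \<noteq> p (Suc k) \<and> f (p (Suc k)) (flip x (p k)) = x (p (Suc k))"
    and p_in: "\<forall>k. p k \<in> D"
    and simple: "\<forall>s t. a \<le> s \<longrightarrow> s < t \<longrightarrow> t < b \<longrightarrow> p s \<noteq> p t"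
    using successor_walk_returns[OF finite ne succ] by blast
  define es where "es = map (\<lambda>k. (p k, p (Suc k))) [a..<b]"
  have frus: "(p k, p (Suc k)) \<in> FRUS f x" for k
  proof (rule stabilizing_arc_frustrated[OF mono])
    show "f (p (Suc k)) x \<noteq> x (p (Suc k))" using p_in unstable unfolding Uset_def by blast
    show "f (p (Suc k)) (flip x (p k)) = x (p (Suc k))" using step by blast
  qed
  then have "\<forall>k. (p k, p (Suc k)) \<in> arcs f" unfolding FRUS_def by blast
  then have "closed_trail f es" unfolding es_def by (rule closed_trail_of_walk[OF ab simple])
  moreover have "set es \<subseteq> FRUS f x" using frus unfolding es_def by auto
  moreover have "fst ` set es \<union> snd ` set es \<subseteq> D" using p_in unfolding es_def by auto
  ultimately show ?thesis
    unfolding critical_at_def is_cycle_def using unstable by blast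
qed

(* Frustration of a cycle depends only on the values at its nodes, so criticality transfers
   between configurations that agree there (given that the nodes are unstable). *)
lemma critical_at_transfer:
  assumes crit: "critical_at f x' VC AC" and agree: "\<forall>k\<in>VC. x' k = x k"
    and unstable: "VC \<subseteq> Uset f x"
  shows "critical_at f x VC AC"
proof -
  obtain es where "AC = set es" "VC = fst ` set es \<union> snd ` set es"
    using crit unfolding critical_at_def is_cycle_def by blast
  then have ends: "(a, b) \<in> AC \<Longrightarrow> a \<in> VC \<and> b \<in> VC" for a b by force
  have "AC \<subseteq> FRUS f x"
    using crit ends agree unfolding critical_at_def FRUS_def by fastforce
  then show ?thesis using crit unstable unfolding critical_at_def by blast
qed

lemma Dset_flip:
  assumes "i \<in> Dset x y"
  shows "Dset (flip x i) y = Dset x y - {i}"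
  using assms unfolding Dset_def flip_def by auto

lemma async_transition_flip:
  assumes "i \<in> Uset f x"
  shows "async_transition f x (flip x i)"
proof -
  have "Dset x (flip x i) = {i}" unfolding Dset_def flip_def by auto
  then show ?thesis using assms unfolding async_transition_def transition_def by simp
qed

lemma async_decomposition:
  fixes f :: "'n::finite ban"
  assumes mono: "monotone_ban f" and tr: "transition f x y"
    and no_crit: "\<not> (\<exists>VC AC. critical_at f x VC AC \<and> VC \<subseteq> Dset x y)"
  shows "async_derivable f x y"
  using tr no_crit
proof (induction "card (Dset x y)" arbitrary: x rule: less_induct)
  case less
  define D where "D = Dset x y"
  have unstable: "D \<subseteq> Uset f x" and ne: "D \<noteq> {}"
    using less.prems(1) unfolding transition_def D_def by auto
  obtain i where i: "i \<in> D" and no_succ: "\<forall>j\<in>D. i \<noteq> j \<longrightarrow> f j (flip x i) \<noteq> x j"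
    using critical_cycle_from_successors[OF mono unstable ne] less.prems(2)
    unfolding D_def by blast
  define x' where "x' = flip x i"
  have first: "async_transition f x x'"
    unfolding x'_def using i unstable by (intro async_transition_flip) blast
  have D': "Dset x' y = D - {i}" using Dset_flip[of i x y] i unfolding x'_def D_def by simp
  show ?case
  proof (cases "D = {i}")
    case True
    then have "Dset x' y = {}" using D' by simp
    then have "x' = y" unfolding Dset_def by auto
    then show ?thesis using first unfolding async_derivable_def by simp
  next
    case False
    have smaller: "card (Dset x' y) < card (Dset x y)"
      using card_Diff1_less[OF finite i] D' unfolding D_def by (simp only:)
    have "j \<in> Uset f x'" if j: "j \<in> Dset x' y" for j
    proof -
      have "j \<in> D" "i \<noteq> j" using j D' by auto
      then have "f j x' \<noteq> x j" using no_succ unfolding x'_def by blast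
      moreover have "x' j = x j" using \<open>i \<noteq> j\<close> unfolding x'_def flip_def by simp
      ultimately show ?thesis unfolding Uset_def by simp
    qed
    moreover have "Dset x' y \<noteq> {}" using D' False i ne by blast
    ultimately have tr': "transition f x' y" unfolding transition_def by blast
    have "\<not> (\<exists>VC AC. critical_at f x' VC AC \<and> VC \<subseteq> Dset x' y)"
    proof
      assume "\<exists>VC AC. critical_at f x' VC AC \<and> VC \<subseteq> Dset x' y"
      then obtain VC AC where crit: "critical_at f x' VC AC" and sub: "VC \<subseteq> D - {i}"
        using D' by auto
      have "\<forall>k\<in>VC. x' k = x k" using sub unfolding x'_def flip_def by auto
      moreover have "VC \<subseteq> Uset f x" using sub unstable by blast
      ultimately have "critical_at f x VC AC" by (rule critical_at_transfer[OF crit])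
      then show False using less.prems(2) sub unfolding D_def by blast
    qed
    then have "async_derivable f x' y" using less.hyps[OF smaller tr'] by blast
    then show ?thesis using first unfolding async_derivable_def
      by (meson tranclp.r_into_trancl tranclp_trans)
  qed
qed

theorem mainTheorem5:
  fixes f :: "'n::finite ban"
  assumes "monotone_ban f"
  shows "(\<forall>x y. sync_transition f x y
            \<longrightarrow> \<not> (\<exists>VC AC. critical_at f x VC AC \<and> VC \<subseteq> Dset x y)
            \<longrightarrow> async_derivable f x y)
       \<and> (\<forall>m::nat. m \<ge> 2
            \<longrightarrow> \<not> (\<exists>VC AC. critical f VC AC \<and> card VC \<le> m)
            \<longrightarrow> (\<forall>x y. transition f x y \<and> card (Dset x y) \<le> m \<longrightarrow> async_derivable f x y))"
proof (intro conjI allI impI; (elim conjE)?)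
  fix x y assume "sync_transition f x y"
    and "\<not> (\<exists>VC AC. critical_at f x VC AC \<and> VC \<subseteq> Dset x y)"
  then show "async_derivable f x y"
    using async_decomposition[OF assms] unfolding sync_transition_def by blast
next
  fix m :: nat and x y assume no_crit: "\<not> (\<exists>VC AC. critical f VC AC \<and> card VC \<le> m)"
    and tr: "transition f x y" and small: "card (Dset x y) \<le> m"
  have "card VC \<le> m" if "VC \<subseteq> Dset x y" for VC :: "'n set"
    using card_mono[OF _ that] small by simp
  then have "\<not> (\<exists>VC AC. critical_at f x VC AC \<and> VC \<subseteq> Dset x y)"
    using no_crit unfolding critical_def by blast
  then show "async_derivable f x y" using async_decomposition[OF assms tr] by blast
qed

end
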